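(* Let $p$ and $q$ be prime numbers, let $u \geqslant 1$ and $n \geqslant q$ be integers, and let $$f(x) = a_{n}x^{n} + a_{n-1}x^{n-1} + \cdots + a_{q}x^{q} + p^{u} \in \mathbb{Z}[x]$$ with $a_n \neq 0$. Suppose that $p \nmid a_{q}$, that $q \nmid u$, and that $$p^{u} > |a_{n}| + |a_{n-1}| + \cdots + |a_{q}|.$$ Then $f(x)$ is irreducible over $\mathbb{Q}$. *)

theory Defs
  imports "HOL-Computational_Algebra.Computational_Algebra"
begin

end

theory Submission
  imports Defs "Berlekamp_Zassenhaus.Factor_Bound"
begin

hide_const (open) UnivPoly.coeff Module.smult

text \<open>
  Since \<open>p\<^sup>u\<close> dominates the other coefficients, every complex root of \<open>f\<close> lies outside the
  unit disc. Hence in a factorisation \<open>f = g h\<close> into non-constant integer polynomials the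
  constant terms satisfy \<open>|g(0)|, |h(0)| > 1\<close>, and as \<open>g(0) h(0) = p\<^sup>u\<close> both are divisible by \<open>p\<close>,
  say with \<open>v\<^sub>p(g(0)) = s\<close>, \<open>v\<^sub>p(h(0)) = t\<close>, \<open>s + t = u\<close>.
  Consider the Gauss valuation \<open>w\<close> extending \<open>q v\<^sub>p\<close> with \<open>w(x) = u\<close>. It satisfies
  \<open>w(g h) \<le> w(g) + w(h)\<close>, and \<open>w(f) = u q\<close> because of the gap between \<open>x\<^sup>0\<close> and \<open>x\<^sup>q\<close>. Since
  \<open>p \<nmid> a\<^sub>q\<close> there are \<open>i + j = q\<close> with \<open>p \<nmid> g\<^sub>i\<close> and \<open>p \<nmid> h\<^sub>j\<close>, so
  \<open>w(g) \<le> min(q s, u i)\<close> and \<open>w(h) \<le> min(q t, u j)\<close>. Comparing with \<open>u q \<le> w(g) + w(h)\<close> forces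
  \<open>q s = u i\<close> with \<open>0 < i < q\<close>, contradicting \<open>q \<nmid> u\<close>.
\<close>

lemma norm_root_gt_1_if_constant_coeff_dominates:
  fixes f :: "'a::real_normed_field poly"
  assumes dom: "(\<Sum>k=1..degree f. norm (coeff f k)) < norm (coeff f 0)"
    and root: "poly f z = 0"
  shows "norm z > 1"
proof (rule ccontr)
  assume "\<not> norm z > 1"
  then have z: "norm z \<le> 1" by simp
  have "poly f z = coeff f 0 + (\<Sum>k=1..degree f. coeff f k * z ^ k)"
    by (simp add: poly_altdef atMost_atLeast0 sum.atLeast_Suc_atMost)
  then have "norm (coeff f 0) = norm (\<Sum>k=1..degree f. coeff f k * z ^ k)"
    using root by (simp add: add_eq_0_iff)
  also have "\<dots> \<le> (\<Sum>k=1..degree f. norm (coeff f k))"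
  proof (rule order_trans[OF norm_sum sum_mono])
    fix k
    have "norm z ^ k \<le> 1" using z by (simp add: power_le_one)
    then show "norm (coeff f k * z ^ k) \<le> norm (coeff f k)"
      by (simp add: norm_mult norm_power mult_left_le)
  qed
  finally show False using dom by simp
qed

lemma one_less_prod_list:
  fixes xs :: "'a::linordered_semidom list"
  assumes "xs \<noteq> []" "\<And>x. x \<in> set xs \<Longrightarrow> 1 < x"
  shows "1 < prod_list xs"
  using assms by (induction xs rule: list_nonempty_induct) (auto intro: less_1_mult)

lemma norm_lead_coeff_less_norm_coeff_0:
  fixes f :: "complex poly"
  assumes deg: "degree f \<ge> 1" and roots: "\<And>z. poly f z = 0 \<Longrightarrow> norm z > 1"
  shows "norm (lead_coeff f) < norm (coeff f 0)"
proof -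
  obtain as where fac: "smult (lead_coeff f) (\<Prod>a\<leftarrow>as. [:- a, 1:]) = f"
    and len: "length as = degree f"
    using fundamental_theorem_algebra_factorized by blast
  have "poly f a = 0" if "a \<in> set as" for a
    using linear_poly_root[OF that] by (subst fac[symmetric]) simp
  then have prod_gt_1: "1 < (\<Prod>a\<leftarrow>as. norm a)"
    using len deg roots by (intro one_less_prod_list) auto
  have "coeff f 0 = lead_coeff f * (\<Prod>a\<leftarrow>as. - a)"
    by (subst (1) fac[symmetric]) (simp add: coeff_0_prod_list o_def)
  then have "norm (coeff f 0) = norm (lead_coeff f) * (\<Prod>a\<leftarrow>as. norm a)"
    by (simp add: norm_mult)
  moreover have "lead_coeff f \<noteq> 0" using deg by auto
  ultimately show ?thesis using prod_gt_1 by simp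
qed

lemma abs_coeff_0_gt_1_if_roots_outside_unit_disc:
  fixes g :: "int poly"
  assumes "degree g \<ge> 1"
    and "\<And>z. poly (map_poly of_int g) z = 0 \<Longrightarrow> cmod z > 1"
  shows "\<bar>coeff g 0\<bar> > 1"
proof -
  have "cmod (lead_coeff (map_poly complex_of_int g)) < cmod (coeff (map_poly of_int g) 0)"
    using assms by (intro norm_lead_coeff_less_norm_coeff_0) simp_all
  then have "real_of_int \<bar>lead_coeff g\<bar> < real_of_int \<bar>coeff g 0\<bar>" by simp
  then have "\<bar>lead_coeff g\<bar> < \<bar>coeff g 0\<bar>" by (simp only: of_int_less_iff)
  moreover have "lead_coeff g \<noteq> 0" using assms(1) by auto
  ultimately show ?thesis by linarith
qed

lemma prime_elem_dvd_if_non_unit_dvd_power: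
  fixes p x :: "'a::factorial_semiring_gcd"
  assumes "prime_elem p" "x dvd p ^ n" "\<not> is_unit x"
  shows "p dvd x"
proof (rule ccontr)
  assume "\<not> p dvd x"
  have "is_unit x"
    using prime_elem_imp_power_coprime[OF assms(1) \<open>\<not> p dvd x\<close>] dvd_refl assms(2)
    by (rule coprime_common_divisor)
  with assms(3) show False by contradiction
qed

lemma prime_dvd_coeff_0_of_factor:
  fixes f g :: "int poly" and p :: int
  assumes "prime p" "coeff f 0 = p ^ u" "g dvd f" "degree g \<ge> 1"
    and roots: "\<And>z. poly (map_poly of_int f) z = 0 \<Longrightarrow> cmod z > 1"
  shows "p dvd coeff g 0"
proof -
  obtain h where f: "f = g * h" using \<open>g dvd f\<close> by blast
  have "\<bar>coeff g 0\<bar> > 1"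
  proof (rule abs_coeff_0_gt_1_if_roots_outside_unit_disc[OF \<open>degree g \<ge> 1\<close>])
    fix z :: complex
    assume "poly (map_poly of_int g) z = 0"
    then show "cmod z > 1"
      by (intro roots) (simp only: f of_int_poly_hom.hom_mult poly_mult mult_zero_left)
  qed
  then have "\<not> is_unit (coeff g 0)" by auto
  moreover have "coeff g 0 dvd p ^ u"
    using assms(2) dvd_triv_left[of "coeff g 0" "coeff h 0"] by (simp add: f coeff_mult_0)
  ultimately show ?thesis
    using prime_elem_dvd_if_non_unit_dvd_power[OF prime_imp_prime_elem[OF assms(1)]] by blast
qed

lemma coeff_mult_not_dvdE:
  fixes g h :: "'a::comm_semiring_1 poly"
  assumes "\<not> p dvd coeff (g * h) k"
  obtains i j where "i + j = k" "\<not> p dvd coeff g i" "\<not> p dvd coeff h j"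
proof -
  obtain i where "i \<le> k" "\<not> p dvd coeff g i * coeff h (k - i)"
    using assms unfolding coeff_mult by (meson atMost_iff dvd_sum)
  then show ?thesis using that[of i "k - i"] by (metis dvd_mult dvd_mult2 le_add_diff_inverse)
qed

lemma multiplicity_add_eq:
  fixes p x y :: "'a::{factorial_semiring,idom}"
  assumes x: "x \<noteq> 0" and p: "\<not> is_unit p" and y: "p ^ Suc (multiplicity p x) dvd y"
  shows "x + y \<noteq> 0" and "multiplicity p (x + y) = multiplicity p x"
proof -
  have "\<not> p ^ Suc (multiplicity p x) dvd x"
    using multiplicity_geI[OF x p] by fastforce
  then have not_dvd: "\<not> p ^ Suc (multiplicity p x) dvd x + y"
    using y by (metis add_diff_cancel_right' dvd_diff)
  then show "x + y \<noteq> 0" by auto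
  have "p ^ multiplicity p x dvd y"
    using y by (metis dvd_mult_right power_Suc)
  then have "p ^ multiplicity p x dvd x + y" by (simp add: multiplicity_dvd)
  then show "multiplicity p (x + y) = multiplicity p x"
    using not_dvd by (rule multiplicity_eqI)
qed

lemma irreducible_rat_poly_if_no_int_factorization:
  fixes f :: "int poly"
  assumes "degree f \<ge> 1"
    and "\<And>g h. f = g * h \<Longrightarrow> degree g \<ge> 1 \<Longrightarrow> degree h \<ge> 1 \<Longrightarrow> False"
  shows "irreducible (map_poly (of_int :: int \<Rightarrow> rat) f)"
proof -
  have "irreducible\<^sub>d (map_poly (of_int :: int \<Rightarrow> rat) f)"
  proof (rule irreducible\<^sub>dI)
    fix g h :: "rat poly"
    assume "degree g > 0" "degree h > 0" "map_poly of_int f = g * h"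
    then show False using rat_to_int_factor assms(2) by (metis One_nat_def Suc_leI)
  qed (use assms(1) in simp)
  then show ?thesis by simp
qed

text \<open>
  Scaled by \<open>a\<close> to stay in \<open>nat\<close>, this is the Gauss valuation of \<open>g\<close> that extends the
  \<open>p\<close>-adic valuation by \<open>v(x) = b / a\<close>.
\<close>

definition weighted_gauss_val :: "'a::factorial_semiring \<Rightarrow> nat \<Rightarrow> nat \<Rightarrow> 'a poly \<Rightarrow> nat" where
  "weighted_gauss_val p a b g =
     (LEAST m. \<exists>k. coeff g k \<noteq> 0 \<and> a * multiplicity p (coeff g k) + b * k = m)"

lemma weighted_gauss_val_le:
  assumes "coeff g k \<noteq> 0"
  shows "weighted_gauss_val p a b g \<le> a * multiplicity p (coeff g k) + b * k"
  unfolding weighted_gauss_val_def using assms by (intro Least_le) blast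

lemma weighted_gauss_val_first_attained:
  assumes "g \<noteq> 0"
  obtains k where "coeff g k \<noteq> 0"
    and "a * multiplicity p (coeff g k) + b * k = weighted_gauss_val p a b g"
    and "\<And>k'. k' < k \<Longrightarrow> coeff g k' \<noteq> 0 \<Longrightarrow>
           weighted_gauss_val p a b g < a * multiplicity p (coeff g k') + b * k'"
proof -
  let ?w = "\<lambda>k. a * multiplicity p (coeff g k) + b * k"
  let ?attains = "\<lambda>k. coeff g k \<noteq> 0 \<and> ?w k = weighted_gauss_val p a b g"
  have "\<exists>k. ?attains k"
    unfolding weighted_gauss_val_def
    by (rule LeastI_ex) (use assms in \<open>auto intro: exI[of _ "degree g"]\<close>)
  then have "?attains (LEAST k. ?attains k)" by (rule LeastI_ex)
  moreover have "weighted_gauss_val p a b g < ?w k'"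
    if "k' < (LEAST k. ?attains k)" "coeff g k' \<noteq> 0" for k'
    using not_less_Least[OF that(1)] weighted_gauss_val_le[OF that(2), of p a b] that(2)
    by simp
  ultimately show ?thesis using that by blast
qed

text \<open>
  Taking the \<^emph>\<open>first\<close> minimising indices makes every other split \<open>x + (k\<^sub>1 + k\<^sub>2 - x)\<close>
  strictly heavier: for \<open>x < k\<^sub>1\<close> the weight of \<open>g\<^sub>x\<close> is strictly larger, for \<open>x > k\<^sub>1\<close> that of
  \<open>h\<^bsub>k\<^sub>1 + k\<^sub>2 - x\<^esub>\<close>.
\<close>

lemma multiplicity_other_terms_gt_at_first_minima:
  fixes p :: "'a::{factorial_semiring,idom}"
  assumes p: "prime_elem p" and "a > 0"
    and g1: "coeff g k1 \<noteq> 0"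
    and g2: "a * multiplicity p (coeff g k1) + b * k1 = weighted_gauss_val p a b g"
    and g3: "\<And>k. k < k1 \<Longrightarrow> coeff g k \<noteq> 0 \<Longrightarrow>
               weighted_gauss_val p a b g < a * multiplicity p (coeff g k) + b * k"
    and h1: "coeff h k2 \<noteq> 0"
    and h2: "a * multiplicity p (coeff h k2) + b * k2 = weighted_gauss_val p a b h"
    and h3: "\<And>k. k < k2 \<Longrightarrow> coeff h k \<noteq> 0 \<Longrightarrow>
               weighted_gauss_val p a b h < a * multiplicity p (coeff h k) + b * k"
    and x: "x \<le> k1 + k2" "x \<noteq> k1"
  shows "p ^ Suc (multiplicity p (coeff g k1 * coeff h k2)) dvd coeff g x * coeff h (k1 + k2 - x)"
proof (cases "coeff g x = 0 \<or> coeff h (k1 + k2 - x) = 0")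
  case False
  let ?v = "multiplicity p" and ?K = "k1 + k2"
  have nz: "coeff g x \<noteq> 0" "coeff h (?K - x) \<noteq> 0" using False by auto
  have lt: "weighted_gauss_val p a b g + weighted_gauss_val p a b h
      < (a * ?v (coeff g x) + b * x) + (a * ?v (coeff h (?K - x)) + b * (?K - x))"
  proof (cases "x < k1")
    case True
    then show ?thesis using g3[OF True nz(1)] weighted_gauss_val_le[OF nz(2), of p a b] by linarith
  next
    case False
    then have "?K - x < k2" using x by linarith
    from h3[OF this nz(2)] show ?thesis using weighted_gauss_val_le[OF nz(1), of p a b] by linarith
  qed
  have bK: "b * x + b * (?K - x) = b * ?K"
    using x(1) by (simp flip: add_mult_distrib2)
  have mult: "?v (coeff g x * coeff h (?K - x)) = ?v (coeff g x) + ?v (coeff h (?K - x))"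
    "?v (coeff g k1 * coeff h k2) = ?v (coeff g k1) + ?v (coeff h k2)"
    using nz g1 h1 p by (simp_all add: prime_elem_multiplicity_mult_distrib)
  have "a * ?v (coeff g k1 * coeff h k2) < a * ?v (coeff g x * coeff h (?K - x))"
    using lt g2 h2 bK unfolding mult distrib_left by linarith
  then have "?v (coeff g k1 * coeff h k2) < ?v (coeff g x * coeff h (?K - x))" by simp
  then show ?thesis by (intro multiplicity_dvd') simp
qed auto

lemma weighted_gauss_val_mult_le:
  fixes p :: "'a::{factorial_semiring,idom}"
  assumes p: "prime_elem p" and "a > 0" and "g \<noteq> 0" "h \<noteq> 0"
  shows "weighted_gauss_val p a b (g * h) \<le> weighted_gauss_val p a b g + weighted_gauss_val p a b h"
proof -
  obtain k1 where g: "coeff g k1 \<noteq> 0"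
      "a * multiplicity p (coeff g k1) + b * k1 = weighted_gauss_val p a b g"
      "\<And>k. k < k1 \<Longrightarrow> coeff g k \<noteq> 0 \<Longrightarrow>
         weighted_gauss_val p a b g < a * multiplicity p (coeff g k) + b * k"
    using weighted_gauss_val_first_attained[OF \<open>g \<noteq> 0\<close>] by blast
  obtain k2 where h: "coeff h k2 \<noteq> 0"
      "a * multiplicity p (coeff h k2) + b * k2 = weighted_gauss_val p a b h"
      "\<And>k. k < k2 \<Longrightarrow> coeff h k \<noteq> 0 \<Longrightarrow>
         weighted_gauss_val p a b h < a * multiplicity p (coeff h k) + b * k"
    using weighted_gauss_val_first_attained[OF \<open>h \<noteq> 0\<close>] by blast
  define K where "K = k1 + k2"
  define main where "main = coeff g k1 * coeff h k2"
  define rest where "rest = (\<Sum>x\<in>{..K} - {k1}. coeff g x * coeff h (K - x))"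
  have main: "main \<noteq> 0"
    "a * multiplicity p main + b * K = weighted_gauss_val p a b g + weighted_gauss_val p a b h"
    using g h p unfolding main_def K_def
    by (simp_all add: prime_elem_multiplicity_mult_distrib algebra_simps)
  have "p ^ Suc (multiplicity p main) dvd rest"
    unfolding rest_def main_def K_def
    by (intro dvd_sum multiplicity_other_terms_gt_at_first_minima[OF p \<open>a > 0\<close> g h]) auto
  moreover have "coeff (g * h) K = main + rest"
    unfolding coeff_mult main_def rest_def by (subst sum.remove[of _ k1]) (auto simp: K_def)
  moreover have "\<not> is_unit p" using p by (simp add: prime_elem_def)
  ultimately have "coeff (g * h) K \<noteq> 0" "multiplicity p (coeff (g * h) K) = multiplicity p main"
    using multiplicity_add_eq[OF main(1)] by simp_all
  then show ?thesis using weighted_gauss_val_le[of "g * h" K p a b] main(2) by simp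
qed

lemma weighted_gauss_val_ge_if_gap:
  fixes f :: "'a::factorial_semiring poly"
  assumes p: "prime_elem p" and f0: "coeff f 0 = p ^ u"
    and gap: "\<forall>i. 0 < i \<and> i < q \<longrightarrow> coeff f i = 0"
  shows "u * q \<le> weighted_gauss_val p q u f"
proof -
  have "f \<noteq> 0" using f0 p by (auto simp: prime_elem_def)
  then obtain k where k: "coeff f k \<noteq> 0"
      "q * multiplicity p (coeff f k) + u * k = weighted_gauss_val p q u f"
    using weighted_gauss_val_first_attained by blast
  have "k = 0 \<or> q \<le> k" using gap k(1) by (metis not_less neq0_conv)
  then show ?thesis
  proof
    assume "k = 0"
    moreover have "multiplicity p (coeff f 0) = u"
      using f0 by (simp add: multiplicity_prime_power[OF p])
    ultimately show ?thesis using k(2) by (simp add: mult.commute)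
  next
    assume "q \<le> k"
    then have "u * q \<le> u * k" by simp
    then show ?thesis using k(2) by linarith
  qed
qed

lemma no_factorization_with_constant_coeffs_divisible:
  fixes f g h :: "int poly" and p :: int and q u :: nat
  assumes p: "prime p" and q: "prime q" and "\<not> q dvd u"
    and f0: "coeff f 0 = p ^ u" and gap: "\<forall>i. 0 < i \<and> i < q \<longrightarrow> coeff f i = 0"
    and fq: "\<not> p dvd coeff f q"
    and fgh: "f = g * h" and "p dvd coeff g 0" "p dvd coeff h 0"
  shows False
proof -
  let ?v = "multiplicity p" and ?w = "weighted_gauss_val p q u"
  have "f \<noteq> 0" using f0 p by auto
  then have "g \<noteq> 0" "h \<noteq> 0" and c0: "coeff g 0 \<noteq> 0" "coeff h 0 \<noteq> 0"
    using f0 p unfolding fgh by (auto simp: coeff_mult_0)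
  define s where "s = ?v (coeff g 0)"
  define t where "t = ?v (coeff h 0)"
  have "s + t = ?v (coeff g 0 * coeff h 0)"
    unfolding s_def t_def
    by (rule prime_elem_multiplicity_mult_distrib[OF prime_imp_prime_elem[OF p] c0, symmetric])
  also have "\<dots> = u"
    using f0 p unfolding fgh coeff_mult_0
    by (simp add: multiplicity_prime_power[OF prime_imp_prime_elem[OF p]])
  finally have "s + t = u" .
  have "s \<ge> 1" "t \<ge> 1"
  proof -
    have "\<not> is_unit p" using p not_prime_unit by blast
    then show "s \<ge> 1" "t \<ge> 1"
      using \<open>p dvd coeff g 0\<close> \<open>p dvd coeff h 0\<close> multiplicity_gt_zero_iff[OF c0(1)]
        multiplicity_gt_zero_iff[OF c0(2)]
      unfolding s_def t_def by (simp_all add: Suc_le_eq)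
  qed
  obtain i j where "i + j = q" "\<not> p dvd coeff g i" "\<not> p dvd coeff h j"
    using fq unfolding fgh by (rule coeff_mult_not_dvdE)
  then have ij: "coeff g i \<noteq> 0" "?v (coeff g i) = 0" "coeff h j \<noteq> 0" "?v (coeff h j) = 0"
    by (auto simp: not_dvd_imp_multiplicity_0)
  have "u * q \<le> ?w f"
    using f0 gap by (intro weighted_gauss_val_ge_if_gap prime_imp_prime_elem p)
  also have "?w f \<le> ?w g + ?w h"
    unfolding fgh using p q \<open>g \<noteq> 0\<close> \<open>h \<noteq> 0\<close>
    by (intro weighted_gauss_val_mult_le prime_imp_prime_elem) (auto simp: prime_gt_0_nat)
  finally have lower: "u * q \<le> ?w g + ?w h" .
  have "?w g \<le> q * s" "?w h \<le> q * t" "?w g \<le> u * i" "?w h \<le> u * j"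
    using weighted_gauss_val_le[OF c0(1), of p q u] weighted_gauss_val_le[OF c0(2), of p q u]
      weighted_gauss_val_le[OF ij(1), of p q u] weighted_gauss_val_le[OF ij(3), of p q u] ij
    by (simp_all add: s_def t_def)
  moreover have "q * s + q * t = u * q" "u * i + u * j = u * q"
    using \<open>s + t = u\<close> \<open>i + j = q\<close> by (simp_all flip: distrib_left)
  ultimately have "q * s = u * i" "q * t = u * j" using lower by linarith+
  moreover have "q > 0" using q by (simp add: prime_gt_0_nat)
  ultimately have "0 < i" "0 < j"
    using \<open>s \<ge> 1\<close> \<open>t \<ge> 1\<close> by (metis mult_is_0 not_one_le_zero gr0I)+
  have "q dvd u * i" using \<open>q * s = u * i\<close> by (metis dvd_triv_left)
  then have "q dvd i" using q \<open>\<not> q dvd u\<close> by (simp add: prime_dvd_mult_iff)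
  then show False using \<open>0 < i\<close> \<open>0 < j\<close> \<open>i + j = q\<close> nat_dvd_not_less[of i q] by simp
qed

theorem corollary1:
  fixes p q u n :: nat and f :: "int poly"
  assumes "prime p" and "prime q"
    and "u \<ge> 1" and "n \<ge> q"
    and "degree f = n"
    and "coeff f n \<noteq> 0"
    and "coeff f 0 = int p ^ u"
    and "\<forall>i. 0 < i \<and> i < q \<longrightarrow> coeff f i = 0"
    and "\<not> int p dvd coeff f q"
    and "\<not> q dvd u"
    and "int p ^ u > (\<Sum>i=q..n. \<bar>coeff f i\<bar>)"
  shows "irreducible (map_poly (of_int :: int \<Rightarrow> rat) f)"
proof -
  have "q \<ge> 1" using assms(2) by (rule prime_ge_1_nat)
  have "(\<Sum>k=1..n. \<bar>coeff f k\<bar>) = (\<Sum>k=q..n. \<bar>coeff f k\<bar>)"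
    using assms(8) \<open>q \<ge> 1\<close> by (intro sum.mono_neutral_right) auto
  then have "real_of_int (\<Sum>k=1..n. \<bar>coeff f k\<bar>) < real_of_int (int p ^ u)"
    using assms(11) by (simp only: of_int_less_iff)
  then have "(\<Sum>k=1..degree (map_poly complex_of_int f). cmod (coeff (map_poly of_int f) k))
      < cmod (coeff (map_poly complex_of_int f) 0)"
    using assms(5,7) by (simp add: norm_power)
  then have roots: "cmod z > 1" if "poly (map_poly of_int f) z = 0" for z
    using that by (rule norm_root_gt_1_if_constant_coeff_dominates)
  have P: "prime (int p)" using assms(1) by (simp add: prime_nat_int_transfer)
  have no_factor: False if "f = g * h" "degree g \<ge> 1" "degree h \<ge> 1" for g h
  proof (rule no_factorization_with_constant_coeffs_divisible[OF P assms(2,10,7,8,9) that(1)])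
    show "int p dvd coeff g 0" "int p dvd coeff h 0"
      using that by (auto intro: prime_dvd_coeff_0_of_factor[OF P assms(7) _ _ roots])
  qed
  show ?thesis
    using no_factor assms(4,5) \<open>q \<ge> 1\<close> by (intro irreducible_rat_poly_if_no_int_factorization) auto
qed

end
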